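(* Let $\Theta=\Theta^1\times\cdots\times\Theta^k\subseteq\mathbb{R}^p$ be a Cartesian product of convex sets, let $f:\mathbb{R}^p\to\mathbb{R}$ be continuous, convex and bounded below with a minimizer $\theta^\star$ on $\Theta$, $f^\star\triangleq f(\theta^\star)$, and let $\delta\triangleq 1/k$. Consider the randomized block coordinate scheme: given $\theta_0\in\Theta$, for $n\ge1$ choose a separable majorant function $g_n(\theta)=\sum_{i=1}^kg_n^i(\theta^i)$ in $\mathcal{S}_L(f,\theta_{n-1})$, pick $\hat\imath_n\in\{1,\dots,k\}$ uniformly at random (independently), set $\theta_n^{\hat\imath_n}\in\operatorname{arg\,min}_{\theta^{\hat\imath_n}\in\Theta^{\hat\imath_n}}g_n^{\hat\imath_n}(\theta^{\hat\imath_n})$ and $\theta_n^i=\theta_{n-1}^i$ for $i\ne\hat\imath_n$. (i) Assume there is $R>0$ such that $\|\theta-\theta^\star\|_2\le R$ for all $\theta\in\Theta$ with $f(\theta)\le f(\theta_0)$. Then $(f(\theta_n))_{n\ge0}$ converges almost surely to $f^\star$ and $$\mathbb{E}[f(\theta_n)-f^\star]\le\frac{2LR^2}{2+\delta(n-n_0)}\quad\text{for all }n\ge n_0,$$ where $n_0\triangleq\Big\lceil\log\!\Big(\frac{2(f(\theta_0)-f^\star)}{LR^2}-1\Big)\Big/\log\!\Big(\frac{1}{1-\delta}\Big)\Big\rceil$ if $f(\theta_0)-f^\star>LR^2$ and $n_0\triangleq0$ otherwise. (ii) If $f$ is $\mu$-strongly convex (with no level-set assumption), then $\mathbb{E}[f(\theta_n)-f^\star]\le((1-\delta)+\delta\beta)^n(f(\theta_0)-f^\star)$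 for all $n\ge 1$, where $\beta\triangleq\frac{L}{\mu}$ if $\mu>2L$ and $\beta\triangleq1-\frac{\mu}{4L}$ otherwise.
   Context: First-order surrogates: $g:\mathbb{R}^p\to\mathbb{R}$ belongs to $\mathcal{S}_L(f,\kappa)$ if (a) $g(\theta')\ge f(\theta')$ for all $\theta'\in\operatorname{arg\,min}_{\theta\in\Theta}g(\theta)$, and (b) $h\triangleq g-f$ is differentiable with $L$-Lipschitz gradient, $h(\kappa)=0$, $\nabla h(\kappa)=0$. A majorant function satisfies $g\ge f$ everywhere. The minimizers are assumed to exist. *)

theory Defs
  imports "HOL-Analysis.Analysis" "HOL-Probability.Probability"
begin

definition argmin_on :: "'a set \<Rightarrow> ('a \<Rightarrow> real) \<Rightarrow> 'a set" where
  "argmin_on S g = {x \<in> S. \<forall>y \<in> S. g x \<le> g y}"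

definition first_order_surrogate ::
  "('a::real_inner set) \<Rightarrow> real \<Rightarrow> ('a \<Rightarrow> real) \<Rightarrow> 'a \<Rightarrow> ('a \<Rightarrow> real) \<Rightarrow> bool" where
  "first_order_surrogate Theta L f kappa g \<longleftrightarrow>
     (\<forall>t \<in> argmin_on Theta g. f t \<le> g t) \<and>
     (\<exists>G. (\<forall>x. ((\<lambda>y. g y - f y) has_derivative (\<lambda>v. G x \<bullet> v)) (at x)) \<and>
          (\<forall>x y. norm (G x - G y) \<le> L * norm (x - y)) \<and>
          g kappa - f kappa = 0 \<and> G kappa = 0)"

definition strongly_convex_on :: "real \<Rightarrow> ('a::real_normed_vector \<Rightarrow> real) \<Rightarrow> bool" where
  "strongly_convex_on mu f \<longleftrightarrow>
     (\<forall>x y t. 0 \<le> t \<and> t \<le> 1 \<longrightarrow>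
        f (t *\<^sub>R x + (1 - t) *\<^sub>R y) \<le> t * f x + (1 - t) * f y - mu / 2 * t * (1 - t) * (norm (x - y))\<^sup>2)"

text \<open>Block projection: keep coordinates of block i (blk j = i), zero elsewhere.
  Block i of R^p, i.e. R^{p_i}, is identified with the coordinate subspace of block i.\<close>
definition blockproj :: "('p::finite \<Rightarrow> nat) \<Rightarrow> nat \<Rightarrow> real^'p \<Rightarrow> real^'p" where
  "blockproj blk i x = (\<chi> j. if blk j = i then x $ j else 0)"

definition block_product :: "('p::finite \<Rightarrow> nat) \<Rightarrow> nat \<Rightarrow> (nat \<Rightarrow> (real^'p) set) \<Rightarrow> (real^'p) set" where
  "block_product blk k Th = {x. \<forall>i<k. blockproj blk i x \<in> Th i}"

text \<open>Sample space of the index sequence: i.i.d. uniform on {0..<k}; coordinate 0 unused.\<close>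
definition index_space :: "nat \<Rightarrow> (nat \<Rightarrow> nat) measure" where
  "index_space k = PiM UNIV (\<lambda>_. measure_pmf (pmf_of_set {..<k}))"

text \<open>n_0 of part (i). For k = 1 (delta = 1) log(1/(1-delta)) = +infinity and
  we take the limiting value 1 of the ceiling.\<close>
definition n0_bound :: "nat \<Rightarrow> real \<Rightarrow> real \<Rightarrow> real \<Rightarrow> nat" where
  "n0_bound k L R gap =
     (if gap > L * R\<^sup>2 then
        (if k = 1 then 1
         else nat \<lceil>ln (2 * gap / (L * R\<^sup>2) - 1) / ln (1 / (1 - 1 / real k))\<rceil>)
      else 0)"

end

theory Submission
  imports Defs "HOL-Real_Asymp.Real_Asymp"
begin

text \<open>
  Since the surrogate is separable, majorizes \<open>f\<close>, touches it at \<open>\<theta>\<^sub>n\<close> and exceeds it by at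
  most \<open>L/2 \<parallel>\<cdot> - \<theta>\<^sub>n\<parallel>\<^sup>2\<close>, averaging the block update over the uniformly chosen block gives, for
  every feasible \<open>z\<close>,
  \<open>E[f \<theta>\<^sub>n\<^sub>+\<^sub>1 | past] \<le> (1 - \<delta>) f \<theta>\<^sub>n + \<delta> (f z + L/2 \<parallel>z - \<theta>\<^sub>n\<parallel>\<^sup>2)\<close>.
  Taking \<open>z\<close> on the segment from \<open>\<theta>\<^sub>n\<close> to \<open>\<theta>\<^sup>\<star>\<close> (whose length is at most \<open>R\<close> because the
  iterates stay in the initial level set) yields
  \<open>e\<^sub>n\<^sub>+\<^sub>1 \<le> e\<^sub>n - \<delta>\<alpha> e\<^sub>n + \<delta>\<alpha>\<^sup>2 LR\<^sup>2/2\<close> for the expected gap: with \<open>\<alpha> = 1\<close> it contracts geometrically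
  to \<open>LR\<^sup>2\<close> within \<open>n\<^sub>0\<close> steps, afterwards \<open>\<alpha> = e\<^sub>n/(LR\<^sup>2)\<close> gives the rate \<open>2LR\<^sup>2/(2 + \<delta>j)\<close>.
  Under strong convexity, quadratic growth around \<open>\<theta>\<^sup>\<star>\<close> provides a \<open>z\<close> giving the contraction
  factor \<open>(1 - \<delta>) + \<delta>\<beta>\<close>. Almost sure convergence follows from the monotonicity of \<open>f \<theta>\<^sub>n\<close> and
  Markov's inequality. Since \<open>\<theta>\<^sub>n\<close> depends only on the first \<open>n\<close> indices, all expectations are
  finite averages.
\<close>

definition uniform_avg :: "nat \<Rightarrow> nat \<Rightarrow> ((nat \<Rightarrow> nat) \<Rightarrow> real) \<Rightarrow> real" where
  "uniform_avg k n X = (\<Sum>w\<in>PiE {1..n} (\<lambda>_. {..<k}). X w) / real k ^ n"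

lemma uniform_avg_mono:
  assumes "\<And>w. w \<in> PiE {1..n} (\<lambda>_. {..<k}) \<Longrightarrow> X w \<le> Y w"
  shows "uniform_avg k n X \<le> uniform_avg k n Y"
  unfolding uniform_avg_def using assms by (intro divide_right_mono sum_mono) auto

lemma uniform_avg_affine:
  assumes "k \<ge> 1"
  shows "uniform_avg k n (\<lambda>w. a * X w + b) = a * uniform_avg k n X + b"
  unfolding uniform_avg_def using assms
  by (simp add: sum.distrib sum_distrib_left[symmetric] card_PiE add_divide_distrib)

lemma sum_PiE_atLeastAtMost_Suc:
  "(\<Sum>w\<in>PiE {1..Suc n} (\<lambda>_. A). X w) = (\<Sum>w\<in>PiE {1..n} (\<lambda>_. A). \<Sum>i\<in>A. X (w(Suc n := i)))"
proof -
  have "(\<Sum>w\<in>PiE {1..Suc n} (\<lambda>_. A). X w) = (\<Sum>(i, w)\<in>A \<times> PiE {1..n} (\<lambda>_. A). X (w(Suc n := i)))"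
    using inj_combinator[of "Suc n" "{1..n}" "\<lambda>_. A"]
    by (simp add: atLeastAtMostSuc_conv PiE_insert_eq sum.reindex case_prod_unfold)
  also have "\<dots> = (\<Sum>i\<in>A. \<Sum>w\<in>PiE {1..n} (\<lambda>_. A). X (w(Suc n := i)))"
    by (simp add: sum.cartesian_product)
  finally show ?thesis by (simp add: sum.swap[of _ A])
qed

lemma uniform_avg_Suc:
  assumes "k \<ge> 1"
  shows "uniform_avg k (Suc n) X = uniform_avg k n (\<lambda>w. (\<Sum>i<k. X (w(Suc n := i))) / real k)"
  unfolding uniform_avg_def sum_PiE_atLeastAtMost_Suc
  using assms by (simp add: sum_divide_distrib[symmetric] field_simps)

lemma PiE_dflt_undefined: "PiE_dflt A undefined B = PiE A B"
  by (auto simp: PiE_dflt_def PiE_def extensional_def)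

lemma distr_restrict_Pi_pmf:
  assumes fin: "finite J"
  shows "distr (measure_pmf (Pi_pmf J undefined (\<lambda>_. p))) (PiM J (\<lambda>_. measure_pmf p)) (\<lambda>x. restrict x J)
        = PiM J (\<lambda>_. measure_pmf p)"
proof (rule product_sigma_finite.PiM_eqI, goal_cases)
  case 1
  interpret product_prob_space "\<lambda>_. measure_pmf p" J
    by (intro product_prob_spaceI measure_pmf.prob_space_axioms)
  show ?case by unfold_locales
next
  case (4 A)
  have "Pi\<^sub>E J A \<in> sets (PiM J (\<lambda>_. measure_pmf p))"
    using 4 by (intro sets_PiM_I_finite fin) auto
  hence "emeasure (distr (measure_pmf (Pi_pmf J undefined (\<lambda>_. p))) (PiM J (\<lambda>_. measure_pmf p))
          (\<lambda>x. restrict x J)) (Pi\<^sub>E J A) =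
         emeasure (measure_pmf (Pi_pmf J undefined (\<lambda>_. p))) ((\<lambda>x. restrict x J) -` Pi\<^sub>E J A)"
    using 4 by (subst emeasure_distr) (auto simp: space_PiM)
  also have "\<dots> = emeasure (measure_pmf (Pi_pmf J undefined (\<lambda>_. p))) (PiE_dflt J undefined A)"
    by (intro emeasure_eq_AE AE_pmfI) (auto simp: PiE_dflt_def set_Pi_pmf fin)
  also have "\<dots> = (\<Prod>i\<in>J. emeasure (measure_pmf p) (A i))"
    by (simp add: measure_pmf.emeasure_eq_measure measure_Pi_pmf_PiE_dflt fin prod_ennreal)
  finally show ?case .
qed (use fin in simp_all)

lemma borel_measurable_PiM_measure_pmf_finite:
  fixes F :: "('i \<Rightarrow> 'a) \<Rightarrow> real"
  assumes fin: "finite J" and "countable (UNIV :: 'a set)"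
  shows "F \<in> borel_measurable (PiM J (\<lambda>_. measure_pmf p))"
proof -
  have cnt: "countable (PiE J (\<lambda>_. UNIV :: 'a set))"
    by (intro countable_PiE fin) (use assms in auto)
  have "(\<lambda>x. x) \<in> measurable (PiM J (\<lambda>_. measure_pmf p)) (count_space (PiE J (\<lambda>_. UNIV)))"
  proof (subst measurable_count_space_eq_countable[OF cnt], intro conjI ballI)
    show "(\<lambda>x. x) \<in> space (Pi\<^sub>M J (\<lambda>_. measure_pmf p)) \<rightarrow> (\<Pi>\<^sub>E i\<in>J. UNIV)"
      by (auto simp: space_PiM)
    fix a assume a: "a \<in> (\<Pi>\<^sub>E i\<in>J. UNIV :: 'a set)"
    have "(\<lambda>x. x) -` {a} \<inter> space (Pi\<^sub>M J (\<lambda>_. measure_pmf p)) = PiE J (\<lambda>j. {a j})"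
      using a PiE_singleton[of a J] by (auto simp: space_PiM PiE_def)
    also have "\<dots> \<in> sets (Pi\<^sub>M J (\<lambda>_. measure_pmf p))"
      by (intro sets_PiM_I_finite fin) auto
    finally show "(\<lambda>x. x) -` {a} \<inter> space (Pi\<^sub>M J (\<lambda>_. measure_pmf p)) \<in> sets (Pi\<^sub>M J (\<lambda>_. measure_pmf p))" .
  qed
  from measurable_comp[OF this, of F] show ?thesis by (simp add: o_def)
qed

lemma prob_space_index_space: "k \<ge> 1 \<Longrightarrow> prob_space (index_space k)"
proof -
  assume "k \<ge> 1"
  interpret product_prob_space "\<lambda>_::nat. measure_pmf (pmf_of_set {..<k})" UNIV
    by (intro product_prob_spaceI measure_pmf.prob_space_axioms)
  show ?thesis unfolding index_space_def by unfold_locales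
qed

lemma space_index_space: "space (index_space k) = UNIV"
  by (auto simp: index_space_def space_PiM PiE_def extensional_def)

lemma index_space_integral_finite_dependence:
  fixes F :: "(nat \<Rightarrow> nat) \<Rightarrow> real"
  assumes k: "k \<ge> 1" and dep: "\<And>w w'. (\<forall>j\<in>{1..n}. w j = w' j) \<Longrightarrow> F w = F w'"
  shows "F \<in> borel_measurable (index_space k)"
    and "(\<integral>w. F w \<partial>index_space k) = uniform_avg k n F"
proof -
  let ?J = "{1..n}"
  let ?p = "pmf_of_set {..<k}"
  let ?M = "\<lambda>_::nat. measure_pmf ?p"
  interpret product_prob_space ?M UNIV
    by (intro product_prob_spaceI measure_pmf.prob_space_axioms)
  have F_restrict: "F (restrict x ?J) = F x" for x by (rule dep) auto
  have ne: "{..<k} \<noteq> {}" using k by (simp add: lessThan_empty_iff)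
  have m_restrict: "(\<lambda>x. restrict x ?J) \<in> measurable (PiM UNIV ?M) (PiM ?J ?M)"
    by (rule measurable_restrict_subset) auto
  have m_F: "F \<in> borel_measurable (PiM ?J ?M)"
    by (rule borel_measurable_PiM_measure_pmf_finite) auto
  show "F \<in> borel_measurable (index_space k)"
    unfolding index_space_def using measurable_comp[OF m_restrict m_F] F_restrict by (simp add: o_def)
  have "(\<integral>w. F w \<partial>index_space k) = integral\<^sup>L (PiM UNIV ?M) (\<lambda>x. F (restrict x ?J))"
    by (simp only: index_space_def F_restrict)
  also have "\<dots> = integral\<^sup>L (distr (PiM UNIV ?M) (PiM ?J ?M) (\<lambda>x. restrict x ?J)) F"
    by (rule integral_distr[OF m_restrict m_F, symmetric])
  also have "distr (PiM UNIV ?M) (PiM ?J ?M) (\<lambda>x. restrict x ?J)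
      = distr (measure_pmf (Pi_pmf ?J undefined (\<lambda>_. ?p))) (PiM ?J ?M) (\<lambda>x. restrict x ?J)"
    by (simp add: distr_PiM_restrict_finite distr_restrict_Pi_pmf)
  also have "integral\<^sup>L \<dots> F = integral\<^sup>L (measure_pmf (Pi_pmf ?J undefined (\<lambda>_. ?p))) (\<lambda>x. F (restrict x ?J))"
    by (rule integral_distr[OF _ m_F]) (auto simp: space_PiM)
  also have "Pi_pmf ?J undefined (\<lambda>_. ?p) = pmf_of_set (PiE ?J (\<lambda>_. {..<k}))"
    using Pi_pmf_of_set[of ?J "\<lambda>_. {..<k}" undefined] ne by (simp add: PiE_dflt_undefined)
  also have "integral\<^sup>L (measure_pmf (pmf_of_set (PiE ?J (\<lambda>_. {..<k})))) (\<lambda>x. F (restrict x ?J))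
      = (\<Sum>w\<in>PiE ?J (\<lambda>_. {..<k}). F w) / card (PiE ?J (\<lambda>_. {..<k}))"
    using ne by (subst integral_pmf_of_set) (auto simp: finite_PiE PiE_eq_empty_iff F_restrict)
  finally show "(\<integral>w. F w \<partial>index_space k) = uniform_avg k n F"
    by (simp add: uniform_avg_def card_PiE)
qed

lemma index_space_measure_finite_dependence:
  assumes k: "k \<ge> 1" and dep: "\<And>w w'. (\<forall>j\<in>{1..n}. w j = w' j) \<Longrightarrow> w \<in> S \<longleftrightarrow> w' \<in> S"
  shows "S \<in> sets (index_space k)"
    and "measure (index_space k) S = uniform_avg k n (indicator S)"
proof -
  have dep': "(indicator S w :: real) = indicator S w'" if "\<forall>j\<in>{1..n}. w j = w' j" for w w'
    using dep[OF that] by (simp add: indicator_def)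
  show "S \<in> sets (index_space k)"
    using index_space_integral_finite_dependence(1)[of k n "indicator S", OF k dep']
    by (simp add: borel_measurable_indicator_iff space_index_space)
  show "measure (index_space k) S = uniform_avg k n (indicator S)"
    using index_space_integral_finite_dependence(2)[of k n "indicator S", OF k dep'] by (simp add: space_index_space)
qed

lemma first_order_surrogate_eq_center:
  "first_order_surrogate Th L f \<kappa> g \<Longrightarrow> g \<kappa> = f \<kappa>"
  unfolding first_order_surrogate_def by auto

lemma first_order_surrogate_le_quadratic:
  fixes f g :: "'a::real_inner \<Rightarrow> real"
  assumes "first_order_surrogate Th L f \<kappa> g"
  shows "g z \<le> f z + L / 2 * (norm (z - \<kappa>))\<^sup>2"
proof -
  obtain G where G: "\<And>x. ((\<lambda>y. g y - f y) has_derivative (\<lambda>v. G x \<bullet> v)) (at x)"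
    and Lip: "\<And>x y. norm (G x - G y) \<le> L * norm (x - y)"
    and h0: "g \<kappa> - f \<kappa> = 0" and G0: "G \<kappa> = 0"
    using assms unfolding first_order_surrogate_def by blast
  define d where "d = z - \<kappa>"
  define \<phi> where "\<phi> = (\<lambda>t::real. g (\<kappa> + t *\<^sub>R d) - f (\<kappa> + t *\<^sub>R d) - L / 2 * t\<^sup>2 * (norm d)\<^sup>2)"
  have D: "(\<phi> has_real_derivative (G (\<kappa> + t *\<^sub>R d) \<bullet> d - L * t * (norm d)\<^sup>2)) (at t)" for t
  proof -
    have "((\<lambda>t. g (\<kappa> + t *\<^sub>R d) - f (\<kappa> + t *\<^sub>R d)) has_derivative (\<lambda>s. G (\<kappa> + t *\<^sub>R d) \<bullet> (s *\<^sub>R d))) (at t)"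
      by (rule has_derivative_compose[OF _ G, of "\<lambda>t. \<kappa> + t *\<^sub>R d", simplified])
        (auto intro!: derivative_eq_intros)
    moreover have "(\<lambda>s. G (\<kappa> + t *\<^sub>R d) \<bullet> (s *\<^sub>R d)) = (*) (G (\<kappa> + t *\<^sub>R d) \<bullet> d)"
      by (auto simp: fun_eq_iff)
    ultimately have "((\<lambda>t. g (\<kappa> + t *\<^sub>R d) - f (\<kappa> + t *\<^sub>R d)) has_real_derivative (G (\<kappa> + t *\<^sub>R d) \<bullet> d)) (at t)"
      by (simp only: has_field_derivative_def)
    moreover have "((\<lambda>t. L / 2 * t\<^sup>2 * (norm d)\<^sup>2) has_real_derivative L * t * (norm d)\<^sup>2) (at t)"
      by (auto intro!: derivative_eq_intros)
    ultimately show ?thesis unfolding \<phi>_def by (rule DERIV_diff)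
  qed
  text \<open>The gradient of \<open>g - f\<close> vanishes at \<open>\<kappa>\<close> and is \<open>L\<close>-Lipschitz, so \<open>\<phi>\<close> is nonincreasing.\<close>
  have "\<phi> 1 \<le> \<phi> 0"
  proof (rule DERIV_nonpos_imp_nonincreasing[of 0 1])
    fix t :: real assume t: "0 \<le> t" "t \<le> 1"
    have "G (\<kappa> + t *\<^sub>R d) \<bullet> d = (G (\<kappa> + t *\<^sub>R d) - G \<kappa>) \<bullet> d" using G0 by simp
    also have "\<dots> \<le> norm (G (\<kappa> + t *\<^sub>R d) - G \<kappa>) * norm d" by (rule norm_cauchy_schwarz)
    also have "\<dots> \<le> L * norm ((\<kappa> + t *\<^sub>R d) - \<kappa>) * norm d"
      by (rule mult_right_mono[OF Lip]) simp
    also have "\<dots> = L * t * (norm d)\<^sup>2" using t by (simp add: power2_eq_square)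
    finally show "\<exists>y. (\<phi> has_real_derivative y) (at t) \<and> y \<le> 0"
      using D[of t] by (intro exI[of _ "G (\<kappa> + t *\<^sub>R d) \<bullet> d - L * t * (norm d)\<^sup>2"]) simp
  qed simp
  then show ?thesis using h0 by (simp add: \<phi>_def d_def)
qed

lemma strongly_convex_quadratic_growth:
  fixes f :: "'a::real_normed_vector \<Rightarrow> real"
  assumes sc: "strongly_convex_on mu f" and "convex S" and "ts \<in> S"
    and min: "\<And>t. t \<in> S \<Longrightarrow> f ts \<le> f t" and "\<theta> \<in> S"
  shows "mu / 2 * (norm (\<theta> - ts))\<^sup>2 \<le> f \<theta> - f ts"
proof (rule ccontr)
  define D where "D = f \<theta> - f ts"
  define Q where "Q = mu / 2 * (norm (\<theta> - ts))\<^sup>2"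
  assume "\<not> mu / 2 * (norm (\<theta> - ts))\<^sup>2 \<le> f \<theta> - f ts"
  hence QD: "D < Q" by (simp add: Q_def D_def)
  have "0 \<le> D" using min \<open>\<theta> \<in> S\<close> by (simp add: D_def)
  text \<open>Minimality of \<open>ts\<close> along the segment towards \<open>\<theta>\<close>, tested at the point \<open>t\<close> below,
    contradicts \<open>D < Q\<close>.\<close>
  define t where "t = (Q - D) / (2 * Q)"
  have Q0: "Q > 0" using QD \<open>0 \<le> D\<close> by simp
  have t: "0 < t" "t \<le> 1" using QD \<open>0 \<le> D\<close> Q0 by (auto simp: t_def field_simps)
  have "t *\<^sub>R \<theta> + (1 - t) *\<^sub>R ts \<in> S"
    using assms t by (simp add: convex_def)
  then have "f ts \<le> f (t *\<^sub>R \<theta> + (1 - t) *\<^sub>R ts)" by (rule min)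
  also have "\<dots> \<le> t * f \<theta> + (1 - t) * f ts - mu / 2 * t * (1 - t) * (norm (\<theta> - ts))\<^sup>2"
    using sc t unfolding strongly_convex_on_def by auto
  finally have "t * ((1 - t) * Q) \<le> t * D" by (simp add: Q_def D_def algebra_simps)
  hence "(1 - t) * Q \<le> D" using t by simp
  moreover have "(1 - t) * Q = (Q + D) / 2" using Q0 by (simp add: t_def field_simps)
  ultimately show False using QD by simp
qed

lemma convex_quadratic_model_le:
  fixes f :: "'a::real_normed_vector \<Rightarrow> real"
  assumes f: "convex_on UNIV f" and S: "convex S" "\<theta> \<in> S" "ts \<in> S"
    and R: "norm (\<theta> - ts) \<le> R" and L: "L \<ge> 0" and \<alpha>: "0 \<le> \<alpha>" "\<alpha> \<le> 1"
  shows "\<exists>z\<in>S. f z + L / 2 * (norm (z - \<theta>))\<^sup>2 - f ts \<le> (1 - \<alpha>) * (f \<theta> - f ts) + \<alpha>\<^sup>2 * (L * R\<^sup>2) / 2"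
proof
  define z where "z = (1 - \<alpha>) *\<^sub>R \<theta> + \<alpha> *\<^sub>R ts"
  show "z \<in> S" using S \<alpha> unfolding z_def by (simp add: convex_def)
  have fz: "f z \<le> (1 - \<alpha>) * f \<theta> + \<alpha> * f ts"
    unfolding z_def by (rule convex_onD[OF f \<alpha>]) auto
  have "norm (z - \<theta>) = \<alpha> * norm (\<theta> - ts)"
    using \<alpha> by (simp add: z_def algebra_simps norm_minus_commute flip: scaleR_diff_right)
  also have "\<dots> \<le> \<alpha> * R" using R \<alpha> by (intro mult_left_mono)
  finally have "(norm (z - \<theta>))\<^sup>2 \<le> (\<alpha> * R)\<^sup>2" by (intro power_mono) auto
  then have "L / 2 * (norm (z - \<theta>))\<^sup>2 \<le> L / 2 * (\<alpha> * R)\<^sup>2" using L by (intro mult_left_mono) auto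
  with fz show "f z + L / 2 * (norm (z - \<theta>))\<^sup>2 - f ts \<le> (1 - \<alpha>) * (f \<theta> - f ts) + \<alpha>\<^sup>2 * (L * R\<^sup>2) / 2"
    by (simp add: power_mult_distrib algebra_simps)
qed

lemma strongly_convex_quadratic_model_le:
  fixes f :: "'a::real_normed_vector \<Rightarrow> real"
  assumes sc: "strongly_convex_on mu f" and mu: "mu > 0" and L: "L > 0"
    and S: "convex S" "ts \<in> S" "\<theta> \<in> S" and min: "\<And>t. t \<in> S \<Longrightarrow> f ts \<le> f t"
  shows "\<exists>z\<in>S. f z + L / 2 * (norm (z - \<theta>))\<^sup>2 - f ts
           \<le> (if mu > 2 * L then L / mu else 1 - mu / (4 * L)) * (f \<theta> - f ts)"
proof -
  have growth: "mu / 2 * (norm (ts - \<theta>))\<^sup>2 \<le> f \<theta> - f ts"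
    using strongly_convex_quadratic_growth[OF sc S(1,2) min S(3)] by (simp add: norm_minus_commute)
  show ?thesis
  proof (cases "mu > 2 * L")
    case True
    have "L / 2 * (norm (ts - \<theta>))\<^sup>2 = (L / mu) * (mu / 2 * (norm (ts - \<theta>))\<^sup>2)"
      using mu by (simp add: field_simps)
    also have "\<dots> \<le> (L / mu) * (f \<theta> - f ts)" using growth L mu by (intro mult_left_mono) auto
    finally show ?thesis using True S by (intro bexI[of _ ts]) simp_all
  next
    case False
    define a where "a = mu / (4 * L)"
    have a: "0 \<le> a" "a \<le> 1" using False mu L by (auto simp: a_def field_simps)
    define z where "z = a *\<^sub>R ts + (1 - a) *\<^sub>R \<theta>"
    have "z \<in> S" using S a unfolding z_def by (simp add: convex_def)
    have fz: "f z \<le> a * f ts + (1 - a) * f \<theta> - mu / 2 * a * (1 - a) * (norm (ts - \<theta>))\<^sup>2"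
      using sc a unfolding strongly_convex_on_def z_def by blast
    have "norm (z - \<theta>) = a * norm (ts - \<theta>)"
      using a by (simp add: z_def algebra_simps flip: scaleR_diff_right)
    then have "f z + L / 2 * (norm (z - \<theta>))\<^sup>2 - f ts
        = (1 - a) * (f \<theta> - f ts) + (f z - (a * f ts + (1 - a) * f \<theta>)) + L / 2 * a\<^sup>2 * (norm (ts - \<theta>))\<^sup>2"
      by (simp add: power_mult_distrib algebra_simps)
    also have "\<dots> \<le> (1 - a) * (f \<theta> - f ts) - mu / 2 * a * (1 - a) * (norm (ts - \<theta>))\<^sup>2
        + L / 2 * a\<^sup>2 * (norm (ts - \<theta>))\<^sup>2"
      using fz by simp
    also have "\<dots> = (1 - a) * (f \<theta> - f ts) + a / 2 * (L * a - mu * (1 - a)) * (norm (ts - \<theta>))\<^sup>2"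
      by (simp add: power2_eq_square field_simps)
    also have "\<dots> \<le> (1 - a) * (f \<theta> - f ts)"
    proof -
      have "L * a \<le> mu / 2" using mu L by (simp add: a_def)
      moreover have "mu * (1 - a) \<ge> mu / 2" using False mu L by (simp add: a_def field_simps)
      ultimately show ?thesis using a by (simp add: mult_nonneg_nonpos mult_nonpos_nonneg)
    qed
    finally show ?thesis using False \<open>z \<in> S\<close> by (intro bexI[of _ z]) (simp_all add: a_def)
  qed
qed

lemma geometric_decay:
  fixes e :: "nat \<Rightarrow> real"
  assumes "\<And>n. e (Suc n) \<le> \<rho> * e n" and "\<rho> \<ge> 0"
  shows "e n \<le> \<rho> ^ n * e 0"
proof (induction n)
  case (Suc n)
  have "e (Suc n) \<le> \<rho> * e n" by (rule assms(1))
  also have "\<dots> \<le> \<rho> * (\<rho> ^ n * e 0)" using Suc assms(2) by (rule mult_left_mono)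
  finally show ?case by (simp add: mult.assoc)
qed simp

lemma sublinear_decay_step:
  fixes c \<delta> e b e' j :: real
  assumes c: "c > 0" and \<delta>: "0 < \<delta>" "\<delta> \<le> 1" and j: "j \<ge> 0"
    and b: "b = 2 * c / (2 + \<delta> * j)" and e: "0 \<le> e" "e \<le> b"
    and e': "e' \<le> e - \<delta> * e\<^sup>2 / (2 * c)"
  shows "e' \<le> 2 * c / (2 + \<delta> * (j + 1))"
proof -
  define D where "D = 2 + \<delta> * j"
  have D: "D \<ge> 2" using \<delta> j by (simp add: D_def)
  have "b \<le> 2 * c / 2" unfolding b D_def[symmetric] using D c by (intro divide_left_mono) auto
  then have b_le_c: "b \<le> c" by simp
  text \<open>\<open>x \<mapsto> x - \<delta> x\<^sup>2 / (2c)\<close> is increasing on \<open>[0, c/\<delta>] \<supseteq> [0, b]\<close>.\<close>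
  have "e - \<delta> * e\<^sup>2 / (2 * c) \<le> b - \<delta> * b\<^sup>2 / (2 * c)"
  proof -
    have "\<delta> * (b + e) \<le> 1 * (2 * c)" using \<delta> e b_le_c by (intro mult_mono) auto
    then have "0 \<le> (b - e) * (1 - \<delta> * (b + e) / (2 * c))"
      using c e by (intro mult_nonneg_nonneg) (auto simp: field_simps)
    also have "\<dots> = b - \<delta> * b\<^sup>2 / (2 * c) - (e - \<delta> * e\<^sup>2 / (2 * c))"
      using c by (simp add: field_simps power2_eq_square)
    finally show ?thesis by simp
  qed
  also have "\<dots> = 2 * c * (D - \<delta>) / D\<^sup>2"
    unfolding b D_def[symmetric] using D c by (simp add: field_simps power2_eq_square)
  also have "\<dots> \<le> 2 * c / (D + \<delta>)"
  proof -
    have "(D - \<delta>) * (D + \<delta>) \<le> D\<^sup>2" by (simp add: power2_eq_square algebra_simps)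
    then have "2 * c * (D - \<delta>) * (D + \<delta>) \<le> 2 * c * D\<^sup>2"
      using c by (simp add: mult.assoc)
    then show ?thesis using D \<delta> by (simp add: field_simps)
  qed
  finally show ?thesis using e' by (simp add: D_def algebra_simps)
qed

lemma n0_bound_level:
  fixes e :: "nat \<Rightarrow> real"
  assumes pos: "L * R\<^sup>2 > 0" and k: "k \<ge> 1"
    and geom: "\<And>n. e n - L * R\<^sup>2 / 2 \<le> (1 - 1 / real k) ^ n * (gap - L * R\<^sup>2 / 2)"
  shows "e (n0_bound k L R gap) \<le> L * R\<^sup>2"
proof -
  define c where "c = L * R\<^sup>2"
  define \<delta> where "\<delta> = 1 / real k"
  define n0 where "n0 = n0_bound k L R gap"
  have c: "c > 0" using pos by (simp add: c_def)
  have geom': "e n - c / 2 \<le> (1 - \<delta>) ^ n * (gap - c / 2)" for n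
    using geom by (simp add: c_def \<delta>_def)
  show ?thesis
  proof (cases "gap > c")
    case False
    then show ?thesis using geom'[of 0] by (simp add: n0_bound_def c_def)
  next
    case gap: True
    show ?thesis
    proof (cases "k = 1")
      case True
      then show ?thesis using gap geom'[of 1] c by (simp add: n0_bound_def c_def \<delta>_def)
    next
      case False
      define A where "A = 2 * gap / c - 1"
      define B where "B = 1 / (1 - \<delta>)"
      have \<delta>: "0 < \<delta>" "\<delta> < 1" using False k by (auto simp: \<delta>_def)
      have A: "A > 1" using gap c by (simp add: A_def field_simps)
      have B: "B > 1" using \<delta> by (simp add: B_def field_simps)
      have n0_eq: "n0 = nat \<lceil>ln A / ln B\<rceil>"
        using gap False by (simp add: n0_def n0_bound_def c_def A_def B_def \<delta>_def)
      have "ln A / ln B \<le> real n0" unfolding n0_eq by (rule real_nat_ceiling_ge)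
      hence "ln A \<le> ln (B ^ n0)" using B by (simp add: field_simps ln_realpow)
      hence "A \<le> B ^ n0" using A B by simp
      hence "(1 - \<delta>) ^ n0 \<le> 1 / A" using A B \<delta>
        by (simp add: B_def power_one_over field_simps)
      hence "(1 - \<delta>) ^ n0 * (gap - c / 2) \<le> (1 / A) * (gap - c / 2)"
        using gap c by (intro mult_right_mono) auto
      also have "(1 / A) * (gap - c / 2) = c / 2" using A c by (simp add: A_def field_simps)
      finally show ?thesis using geom'[of n0] by (simp add: n0_def c_def)
    qed
  qed
qed

text \<open>Taking \<open>\<alpha> = 1\<close> in the recursion until the level \<open>LR\<^sup>2\<close> is reached (at \<open>n\<^sub>0\<close>), and
  \<open>\<alpha> = e\<^sub>n / (LR\<^sup>2)\<close> afterwards.\<close>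
lemma sublinear_decay:
  fixes e :: "nat \<Rightarrow> real"
  assumes L: "L > 0" and R: "R > 0" and k: "k \<ge> 1" and e0: "e 0 = gap" and nonneg: "\<And>n. 0 \<le> e n"
    and rec: "\<And>n \<alpha>. 0 \<le> \<alpha> \<Longrightarrow> \<alpha> \<le> 1 \<Longrightarrow>
       e (Suc n) \<le> e n - (1 / real k) * \<alpha> * e n + (1 / real k) * \<alpha>\<^sup>2 * (L * R\<^sup>2) / 2"
    and n: "n \<ge> n0_bound k L R gap"
  shows "e n \<le> 2 * L * R\<^sup>2 / (2 + (1 / real k) * (real n - real (n0_bound k L R gap)))"
proof -
  define c where "c = L * R\<^sup>2"
  define \<delta> where "\<delta> = 1 / real k"
  define n0 where "n0 = n0_bound k L R gap"
  have c: "c > 0" using L R by (simp add: c_def)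
  have \<delta>: "0 < \<delta>" "\<delta> \<le> 1" using k by (auto simp: \<delta>_def)
  have rec': "e (Suc n) \<le> e n - \<delta> * \<alpha> * e n + \<delta> * \<alpha>\<^sup>2 * c / 2" if "0 \<le> \<alpha>" "\<alpha> \<le> 1" for n \<alpha>
    using rec[OF that] by (simp add: c_def \<delta>_def)
  have geom: "e n - c / 2 \<le> (1 - \<delta>) ^ n * (gap - c / 2)" for n
  proof (induction n)
    case (Suc n)
    have "e (Suc n) - c / 2 \<le> (1 - \<delta>) * (e n - c / 2)"
      using rec'[of 1 n] by (simp add: field_simps)
    also have "\<dots> \<le> (1 - \<delta>) * ((1 - \<delta>) ^ n * (gap - c / 2))"
      using Suc \<delta> by (intro mult_left_mono) auto
    finally show ?case by (simp add: mult.assoc)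
  qed (simp add: e0)
  have level: "e n0 \<le> c"
    unfolding n0_def c_def using c k geom by (intro n0_bound_level) (auto simp: c_def \<delta>_def)
  have "e (n0 + j) \<le> 2 * c / (2 + \<delta> * real j)" for j
  proof (induction j)
    case (Suc j)
    have "0 \<le> \<delta> * real j" using \<delta> by simp
    then have "2 * c / (2 + \<delta> * real j) \<le> 2 * c / 2" using c by (intro divide_left_mono) auto
    then have "e (n0 + j) / c \<le> 1" using Suc c by (simp add: field_simps)
    then have "e (Suc (n0 + j)) \<le> e (n0 + j) - \<delta> * (e (n0 + j) / c) * e (n0 + j) + \<delta> * (e (n0 + j) / c)\<^sup>2 * c / 2"
      using nonneg c by (intro rec') auto
    also have "\<dots> = e (n0 + j) - \<delta> * (e (n0 + j))\<^sup>2 / (2 * c)"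
      using c by (simp add: field_simps power2_eq_square)
    finally have "e (Suc (n0 + j)) \<le> 2 * c / (2 + \<delta> * (real j + 1))"
      using Suc nonneg by (intro sublinear_decay_step[OF c \<delta> _ refl]) auto
    then show ?case by (simp add: add.commute)
  qed (use level in simp)
  from this[of "n - n0"] show ?thesis using n by (simp add: c_def \<delta>_def n0_def)
qed

lemma blockproj_linear:
  "blockproj blk i (a *\<^sub>R x + b *\<^sub>R y) = a *\<^sub>R blockproj blk i x + b *\<^sub>R blockproj blk i y"
  by (simp add: blockproj_def vec_eq_iff)

lemma convex_block_product:
  "(\<And>i. i < k \<Longrightarrow> convex (Th i)) \<Longrightarrow> convex (block_product blk k Th)"
  unfolding convex_def block_product_def by (auto simp: blockproj_linear)

locale randomized_block_majorization =
  fixes k :: nat and blk :: "'p::finite \<Rightarrow> nat" and Th :: "nat \<Rightarrow> (real^'p) set"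
    and f :: "real^'p \<Rightarrow> real" and ts :: "real^'p" and L :: real
    and theta :: "nat \<Rightarrow> (nat \<Rightarrow> nat) \<Rightarrow> real^'p"
    and gb :: "nat \<Rightarrow> (nat \<Rightarrow> nat) \<Rightarrow> nat \<Rightarrow> real^'p \<Rightarrow> real"
  assumes k_pos: "k \<ge> 1"
    and Th_convex: "\<And>i. i < k \<Longrightarrow> convex (Th i)"
    and ts_in: "ts \<in> block_product blk k Th"
    and ts_min: "\<And>t. t \<in> block_product blk k Th \<Longrightarrow> f ts \<le> f t"
    and L_pos: "L > 0"
    and init_in: "theta 0 (\<lambda>_. 0) \<in> block_product blk k Th"
    and init_const: "\<And>w. theta 0 w = theta 0 (\<lambda>_. 0)"
    and g_adapted: "\<And>n w w'. \<forall>j\<in>{1..n}. w j = w' j \<Longrightarrow> gb (Suc n) w = gb (Suc n) w'"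
    and theta_adapted: "\<And>n w w'. \<forall>j\<in>{1..n}. w j = w' j \<Longrightarrow> theta n w = theta n w'"
    and g_majorant: "\<And>n w x. \<forall>j\<in>{1..n}. w j < k \<Longrightarrow>
        f x \<le> (\<Sum>i<k. gb (Suc n) w i (blockproj blk i x))"
    and g_surrogate: "\<And>n w. \<forall>j\<in>{1..n}. w j < k \<Longrightarrow>
        first_order_surrogate (block_product blk k Th) L f (theta n w)
          (\<lambda>x. \<Sum>i<k. gb (Suc n) w i (blockproj blk i x))"
    and update_min: "\<And>n w. \<forall>j\<in>{1..Suc n}. w j < k \<Longrightarrow>
        blockproj blk (w (Suc n)) (theta (Suc n) w) \<in> argmin_on (Th (w (Suc n))) (gb (Suc n) w (w (Suc n)))"
    and update_keep: "\<And>n w i. \<forall>j\<in>{1..Suc n}. w j < k \<Longrightarrow> i < k \<Longrightarrow> i \<noteq> w (Suc n) \<Longrightarrow>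
        blockproj blk i (theta (Suc n) w) = blockproj blk i (theta n w)"
begin

abbreviation Theta :: "(real^'p) set" where
  "Theta \<equiv> block_product blk k Th"

abbreviation surrogate :: "nat \<Rightarrow> (nat \<Rightarrow> nat) \<Rightarrow> real^'p \<Rightarrow> real" where
  "surrogate n w x \<equiv> \<Sum>i<k. gb n w i (blockproj blk i x)"

text \<open>An outcome \<open>w\<close> lists the chosen blocks, \<open>w n\<close> being used at step \<open>n\<close>. The hypotheses
  only constrain paths whose indices are genuine blocks; these have full measure
  (\<open>AE_admissible\<close>).\<close>
definition admissible :: "nat \<Rightarrow> (nat \<Rightarrow> nat) \<Rightarrow> bool" where
  "admissible n w \<longleftrightarrow> (\<forall>j\<in>{1..n}. w j < k)"

definition gap :: "nat \<Rightarrow> real" where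
  "gap n = uniform_avg k n (\<lambda>w. f (theta n w) - f ts)"

lemma admissible_Suc: "admissible (Suc n) w \<Longrightarrow> admissible n w"
  by (auto simp: admissible_def)

lemma admissible_if_PiE: "w \<in> PiE {1..n} (\<lambda>_. {..<k}) \<Longrightarrow> admissible n w"
  by (auto simp: admissible_def PiE_iff)

lemma surrogate_at_theta: "admissible n w \<Longrightarrow> surrogate (Suc n) w (theta n w) = f (theta n w)"
  using first_order_surrogate_eq_center[OF g_surrogate] by (simp add: admissible_def)

lemma surrogate_le_quadratic:
  "admissible n w \<Longrightarrow> surrogate (Suc n) w z \<le> f z + L / 2 * (norm (z - theta n w))\<^sup>2"
  using first_order_surrogate_le_quadratic[OF g_surrogate] by (simp add: admissible_def)

text \<open>Only block \<open>i = w (Suc n)\<close> of the separable surrogate changes, and there the new iterate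
  beats the corresponding block of any feasible \<open>z\<close>.\<close>
lemma block_update_le:
  assumes adm: "admissible (Suc n) w" and old: "theta n w \<in> Theta" and z: "z \<in> Theta"
  shows "theta (Suc n) w \<in> Theta"
    and "f (theta (Suc n) w) \<le> surrogate (Suc n) w (theta n w)
           - gb (Suc n) w (w (Suc n)) (blockproj blk (w (Suc n)) (theta n w))
           + gb (Suc n) w (w (Suc n)) (blockproj blk (w (Suc n)) z)"
proof -
  define i where "i = w (Suc n)"
  define g where "g = gb (Suc n) w"
  have i: "i < k" using adm by (auto simp: admissible_def i_def)
  have upd_i: "blockproj blk i (theta (Suc n) w) \<in> argmin_on (Th i) (g i)"
    using update_min adm by (simp add: admissible_def i_def g_def)
  have upd_j: "blockproj blk j (theta (Suc n) w) = blockproj blk j (theta n w)" if "j < k" "j \<noteq> i" for j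
    using update_keep adm that by (simp add: admissible_def i_def)
  show new: "theta (Suc n) w \<in> Theta"
    unfolding block_product_def
  proof (intro CollectI allI impI)
    fix j assume "j < k"
    then show "blockproj blk j (theta (Suc n) w) \<in> Th j"
      using upd_i upd_j old by (cases "j = i") (auto simp: argmin_on_def block_product_def)
  qed
  have "g i (blockproj blk i (theta (Suc n) w)) \<le> g i (blockproj blk i z)"
    using upd_i z i by (auto simp: argmin_on_def block_product_def)
  moreover have "surrogate (Suc n) w (theta (Suc n) w)
      = g i (blockproj blk i (theta (Suc n) w)) + (surrogate (Suc n) w (theta n w) - g i (blockproj blk i (theta n w)))"
  proof -
    have "(\<Sum>j\<in>{..<k} - {i}. g j (blockproj blk j (theta (Suc n) w)))
        = (\<Sum>j\<in>{..<k} - {i}. g j (blockproj blk j (theta n w)))"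
      using upd_j by (intro sum.cong) auto
    then show ?thesis using i by (simp add: g_def sum.remove[of "{..<k}" i])
  qed
  moreover have "f (theta (Suc n) w) \<le> surrogate (Suc n) w (theta (Suc n) w)"
    using g_majorant adm by (simp add: admissible_def)
  ultimately show "f (theta (Suc n) w) \<le> surrogate (Suc n) w (theta n w)
           - gb (Suc n) w (w (Suc n)) (blockproj blk (w (Suc n)) (theta n w))
           + gb (Suc n) w (w (Suc n)) (blockproj blk (w (Suc n)) z)"
    by (simp add: g_def i_def)
qed

lemma theta_feasible_below_init:
  "admissible n w \<Longrightarrow> theta n w \<in> Theta \<and> f (theta n w) \<le> f (theta 0 (\<lambda>_. 0))"
proof (induction n)
  case 0
  show ?case using init_in by (simp add: init_const[of w])
next
  case (Suc n)
  with admissible_Suc have IH: "theta n w \<in> Theta" "f (theta n w) \<le> f (theta 0 (\<lambda>_. 0))" by blast+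
  show ?case
    using block_update_le[OF Suc.prems IH(1) IH(1)] surrogate_at_theta[OF admissible_Suc[OF Suc.prems]] IH(2)
    by simp
qed

lemma f_theta_Suc_le: "admissible (Suc n) w \<Longrightarrow> f (theta (Suc n) w) \<le> f (theta n w)"
  using block_update_le(2)[of n w "theta n w"] theta_feasible_below_init[OF admissible_Suc]
    surrogate_at_theta[OF admissible_Suc] by simp

lemma mean_next_le:
  assumes adm: "admissible n w" and z: "z \<in> Theta"
  shows "(\<Sum>i<k. f (theta (Suc n) (w(Suc n := i)))) / real k
      \<le> (1 - 1 / real k) * f (theta n w) + 1 / real k * (f z + L / 2 * (norm (z - theta n w))\<^sup>2)"
proof -
  define \<theta> where "\<theta> = theta n w"
  have \<theta>: "\<theta> \<in> Theta" using theta_feasible_below_init[OF adm] by (simp add: \<theta>_def)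
  have each: "f (theta (Suc n) (w(Suc n := i)))
      \<le> surrogate (Suc n) w \<theta> - gb (Suc n) w i (blockproj blk i \<theta>) + gb (Suc n) w i (blockproj blk i z)"
    if i: "i < k" for i
  proof -
    have adm': "admissible (Suc n) (w(Suc n := i))" using adm i by (auto simp: admissible_def)
    have "theta n (w(Suc n := i)) = \<theta>" unfolding \<theta>_def by (rule theta_adapted) auto
    moreover have "gb (Suc n) (w(Suc n := i)) = gb (Suc n) w" by (rule g_adapted) auto
    ultimately show ?thesis using block_update_le(2)[OF adm' _ z] \<theta> by simp
  qed
  have "(\<Sum>i<k. f (theta (Suc n) (w(Suc n := i))))
      \<le> (\<Sum>i<k. surrogate (Suc n) w \<theta> - gb (Suc n) w i (blockproj blk i \<theta>) + gb (Suc n) w i (blockproj blk i z))"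
    using each by (intro sum_mono) auto
  also have "\<dots> = real k * surrogate (Suc n) w \<theta> - surrogate (Suc n) w \<theta> + surrogate (Suc n) w z"
    by (simp add: sum.distrib sum_subtractf)
  also have "\<dots> \<le> real k * f \<theta> - f \<theta> + (f z + L / 2 * (norm (z - \<theta>))\<^sup>2)"
    using surrogate_at_theta[OF adm] surrogate_le_quadratic[OF adm, of z] by (simp add: \<theta>_def)
  finally have "(\<Sum>i<k. f (theta (Suc n) (w(Suc n := i)))) / real k
      \<le> (real k * f \<theta> - f \<theta> + (f z + L / 2 * (norm (z - \<theta>))\<^sup>2)) / real k"
    by (intro divide_right_mono) auto
  also have "\<dots> = (1 - 1 / real k) * f \<theta> + 1 / real k * (f z + L / 2 * (norm (z - \<theta>))\<^sup>2)"
    using k_pos by (simp add: field_simps)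
  finally show ?thesis by (simp add: \<theta>_def)
qed

lemma integral_gap: "(\<integral>w. f (theta n w) - f ts \<partial>index_space k) = gap n"
  unfolding gap_def by (rule index_space_integral_finite_dependence(2)[OF k_pos]) (metis theta_adapted)

lemma gap_0: "gap 0 = f (theta 0 (\<lambda>_. 0)) - f ts"
  by (simp add: gap_def uniform_avg_def init_const[of "\<lambda>_. undefined"])

lemma f_ts_le_f_theta: "admissible n w \<Longrightarrow> f ts \<le> f (theta n w)"
  using theta_feasible_below_init ts_min by blast

lemma gap_nonneg: "0 \<le> gap n"
proof -
  have "uniform_avg k n (\<lambda>_. 0) \<le> gap n"
    unfolding gap_def
  proof (rule uniform_avg_mono)
    fix w assume "w \<in> PiE {1..n} (\<lambda>_. {..<k})"
    then show "0 \<le> f (theta n w) - f ts" using f_ts_le_f_theta admissible_if_PiE by simp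
  qed
  then show ?thesis by (simp add: uniform_avg_def)
qed

lemma gap_Suc_le:
  assumes "\<And>w. admissible n w \<Longrightarrow>
    \<exists>z\<in>Theta. f z + L / 2 * (norm (z - theta n w))\<^sup>2 - f ts \<le> a * (f (theta n w) - f ts) + b"
  shows "gap (Suc n) \<le> (1 - 1 / real k + a / real k) * gap n + b / real k"
proof -
  have "gap (Suc n) = uniform_avg k n (\<lambda>w. (\<Sum>i<k. f (theta (Suc n) (w(Suc n := i))) - f ts) / real k)"
    unfolding gap_def by (rule uniform_avg_Suc[OF k_pos])
  also have "\<dots> \<le> uniform_avg k n (\<lambda>w. (1 - 1 / real k + a / real k) * (f (theta n w) - f ts) + b / real k)"
  proof (rule uniform_avg_mono)
    fix w assume "w \<in> PiE {1..n} (\<lambda>_. {..<k})"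
    then have adm: "admissible n w" by (rule admissible_if_PiE)
    then obtain z where z: "z \<in> Theta"
      and zb: "f z + L / 2 * (norm (z - theta n w))\<^sup>2 - f ts \<le> a * (f (theta n w) - f ts) + b"
      using assms by blast
    have "(\<Sum>i<k. f (theta (Suc n) (w(Suc n := i))) - f ts) / real k
        = (\<Sum>i<k. f (theta (Suc n) (w(Suc n := i)))) / real k - f ts"
      using k_pos by (simp add: sum_subtractf diff_divide_distrib)
    also have "\<dots> \<le> (1 - 1 / real k) * (f (theta n w) - f ts)
        + 1 / real k * (f z + L / 2 * (norm (z - theta n w))\<^sup>2 - f ts)"
      using mean_next_le[OF adm z] by (simp add: algebra_simps)
    also have "\<dots> \<le> (1 - 1 / real k) * (f (theta n w) - f ts) + 1 / real k * (a * (f (theta n w) - f ts) + b)"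
      using zb by (intro add_left_mono mult_left_mono) auto
    also have "\<dots> = (1 - 1 / real k + a / real k) * (f (theta n w) - f ts) + b / real k"
      by (simp add: algebra_simps)
    finally show "(\<Sum>i<k. f (theta (Suc n) (w(Suc n := i))) - f ts) / real k
        \<le> (1 - 1 / real k + a / real k) * (f (theta n w) - f ts) + b / real k" .
  qed
  also have "\<dots> = (1 - 1 / real k + a / real k) * gap n + b / real k"
    unfolding gap_def by (rule uniform_avg_affine[OF k_pos])
  finally show ?thesis .
qed

lemma gap_Suc_le_convex:
  assumes f: "convex_on UNIV f"
    and level: "\<And>t. t \<in> Theta \<Longrightarrow> f t \<le> f (theta 0 (\<lambda>_. 0)) \<Longrightarrow> norm (t - ts) \<le> R"
    and \<alpha>: "0 \<le> \<alpha>" "\<alpha> \<le> 1"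
  shows "gap (Suc n) \<le> gap n - 1 / real k * \<alpha> * gap n + 1 / real k * \<alpha>\<^sup>2 * (L * R\<^sup>2) / 2"
proof -
  have "gap (Suc n) \<le> (1 - 1 / real k + (1 - \<alpha>) / real k) * gap n + \<alpha>\<^sup>2 * (L * R\<^sup>2) / 2 / real k"
  proof (rule gap_Suc_le)
    fix w assume "admissible n w"
    with theta_feasible_below_init level have "theta n w \<in> Theta" "norm (theta n w - ts) \<le> R" by blast+
    then show "\<exists>z\<in>Theta. f z + L / 2 * (norm (z - theta n w))\<^sup>2 - f ts
        \<le> (1 - \<alpha>) * (f (theta n w) - f ts) + \<alpha>\<^sup>2 * (L * R\<^sup>2) / 2"
      using convex_quadratic_model_le[OF f convex_block_product[OF Th_convex]] ts_in L_pos \<alpha> by simp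
  qed
  moreover have "(1 - 1 / real k + (1 - \<alpha>) / real k) * gap n + \<alpha>\<^sup>2 * (L * R\<^sup>2) / 2 / real k
      = gap n - 1 / real k * \<alpha> * gap n + 1 / real k * \<alpha>\<^sup>2 * (L * R\<^sup>2) / 2"
    using k_pos by (simp add: field_simps)
  ultimately show ?thesis by simp
qed

lemma gap_Suc_le_strongly_convex:
  assumes "strongly_convex_on mu f" and "mu > 0"
  shows "gap (Suc n) \<le> ((1 - 1 / real k) + (1 / real k) * (if mu > 2 * L then L / mu else 1 - mu / (4 * L))) * gap n"
proof -
  let ?\<beta> = "if mu > 2 * L then L / mu else 1 - mu / (4 * L)"
  have "gap (Suc n) \<le> (1 - 1 / real k + ?\<beta> / real k) * gap n + 0 / real k"
  proof (rule gap_Suc_le)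
    fix w assume "admissible n w"
    then have "theta n w \<in> Theta" using theta_feasible_below_init by blast
    then show "\<exists>z\<in>Theta. f z + L / 2 * (norm (z - theta n w))\<^sup>2 - f ts \<le> ?\<beta> * (f (theta n w) - f ts) + 0"
      using strongly_convex_quadratic_model_le[OF assms L_pos convex_block_product[OF Th_convex] ts_in]
        ts_min by simp
  qed
  then show ?thesis by simp
qed

lemma AE_admissible: "AE w in index_space k. \<forall>n. admissible n w"
proof (subst AE_all_countable, intro allI)
  interpret prob_space "index_space k" by (rule prob_space_index_space[OF k_pos])
  fix n
  let ?S = "{w. \<not> admissible n w}"
  have dep: "w \<in> ?S \<longleftrightarrow> w' \<in> ?S" if "\<forall>j\<in>{1..n}. w j = w' j" for w w'
    using that by (simp add: admissible_def)
  have "(indicator ?S w :: real) = 0" if "w \<in> PiE {1..n} (\<lambda>_. {..<k})" for w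
    using admissible_if_PiE[OF that] by simp
  then have "uniform_avg k n (indicator ?S) = 0"
    unfolding uniform_avg_def by (simp add: sum.neutral)
  then have "?S \<in> null_sets (index_space k)"
    using index_space_measure_finite_dependence[OF k_pos dep]
    by (simp add: emeasure_eq_measure null_sets_def)
  then show "AE w in index_space k. admissible n w"
    by (rule AE_I') (auto simp: space_index_space)
qed

lemma measure_gap_ge_le:
  assumes "\<epsilon> > 0"
  shows "measure (index_space k) {w. \<epsilon> \<le> f (theta n w) - f ts} \<le> gap n / \<epsilon>"
proof -
  let ?S = "{w. \<epsilon> \<le> f (theta n w) - f ts}"
  have dep: "w \<in> ?S \<longleftrightarrow> w' \<in> ?S" if "\<forall>j\<in>{1..n}. w j = w' j" for w w'
    using theta_adapted[OF that] by simp
  have "measure (index_space k) ?S = uniform_avg k n (indicator ?S)"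
    by (rule index_space_measure_finite_dependence(2)[OF k_pos dep])
  also have "\<dots> \<le> uniform_avg k n (\<lambda>w. (1 / \<epsilon>) * (f (theta n w) - f ts) + 0)"
  proof (rule uniform_avg_mono)
    fix w assume "w \<in> PiE {1..n} (\<lambda>_. {..<k})"
    then have "0 \<le> f (theta n w) - f ts" using f_ts_le_f_theta admissible_if_PiE by simp
    then show "indicator ?S w \<le> (1 / \<epsilon>) * (f (theta n w) - f ts) + 0"
      using assms by (auto simp: indicator_def field_simps)
  qed
  also have "\<dots> = gap n / \<epsilon>"
    unfolding gap_def by (subst uniform_avg_affine[OF k_pos]) simp
  finally show ?thesis .
qed

text \<open>By Markov's inequality the gap eventually drops below any \<open>\<epsilon>\<close> almost surely; since
  \<open>f (theta n w)\<close> is nonincreasing and bounded below by \<open>f ts\<close>, this gives convergence.\<close>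
lemma AE_f_theta_tendsto:
  assumes "gap \<longlonglongrightarrow> 0"
  shows "AE w in index_space k. (\<lambda>n. f (theta n w)) \<longlonglongrightarrow> f ts"
proof -
  interpret prob_space "index_space k" by (rule prob_space_index_space[OF k_pos])
  have small: "AE w in index_space k. \<exists>N. f (theta N w) - f ts < \<epsilon>" if \<epsilon>: "\<epsilon> > 0" for \<epsilon>
  proof -
    define S where "S N = {w. \<epsilon> \<le> f (theta N w) - f ts}" for N
    have S_sets: "S N \<in> sets (index_space k)" for N
    proof -
      have "w \<in> S N \<longleftrightarrow> w' \<in> S N" if "\<forall>j\<in>{1..N}. w j = w' j" for w w'
        using theta_adapted[OF that] by (simp add: S_def)
      then show ?thesis by (rule index_space_measure_finite_dependence(1)[OF k_pos])
    qed
    have "measure (index_space k) (\<Inter>N. S N) \<le> gap N / \<epsilon>" for N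
    proof -
      have "measure (index_space k) (\<Inter>N. S N) \<le> measure (index_space k) (S N)"
        using S_sets by (intro finite_measure_mono) auto
      also have "\<dots> \<le> gap N / \<epsilon>" unfolding S_def by (rule measure_gap_ge_le[OF \<epsilon>])
      finally show ?thesis .
    qed
    moreover have "(\<lambda>N. gap N / \<epsilon>) \<longlonglongrightarrow> 0" using assms by (rule tendsto_divide_zero)
    ultimately have "measure (index_space k) (\<Inter>N. S N) \<le> 0" using LIMSEQ_le_const[of "\<lambda>N. gap N / \<epsilon>" 0] by blast
    then have "(\<Inter>N. S N) \<in> null_sets (index_space k)"
      using S_sets by (auto simp: emeasure_eq_measure null_sets_def measure_le_0_iff)
    then show ?thesis by (rule AE_I') (auto simp: S_def not_less space_index_space)
  qed
  have "AE w in index_space k. \<forall>m. \<exists>N. f (theta N w) - f ts < 1 / real (Suc m)"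
    using small by (simp add: AE_all_countable)
  with AE_admissible show ?thesis
  proof eventually_elim
    case (elim w)
    have dec: "decseq (\<lambda>n. f (theta n w))"
      using elim(1) by (intro decseq_SucI f_theta_Suc_le) blast
    show "(\<lambda>n. f (theta n w)) \<longlonglongrightarrow> f ts"
    proof (rule LIMSEQ_I)
      fix r :: real assume "0 < r"
      then obtain m where m: "inverse (real (Suc m)) < r" using reals_Archimedean by blast
      obtain N where N: "f (theta N w) - f ts < 1 / real (Suc m)" using elim(2) by blast
      have "norm (f (theta n w) - f ts) < r" if "N \<le> n" for n
      proof -
        have "f (theta n w) \<le> f (theta N w)" using dec that by (simp add: decseq_def)
        moreover have "f ts \<le> f (theta n w)" using elim(1) f_ts_le_f_theta by blast
        ultimately show ?thesis using N m by (simp add: inverse_eq_divide)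
      qed
      then show "\<exists>no. \<forall>n\<ge>no. norm (f (theta n w) - f ts) < r" by blast
    qed
  qed
qed

lemma gap_sublinear:
  assumes f: "convex_on UNIV f" and R: "R > 0"
    and level: "\<And>t. t \<in> Theta \<Longrightarrow> f t \<le> f (theta 0 (\<lambda>_. 0)) \<Longrightarrow> norm (t - ts) \<le> R"
    and n: "n \<ge> n0_bound k L R (f (theta 0 (\<lambda>_. 0)) - f ts)"
  shows "gap n \<le> 2 * L * R\<^sup>2 / (2 + (1 / real k) * (real n - real (n0_bound k L R (f (theta 0 (\<lambda>_. 0)) - f ts))))"
  by (rule sublinear_decay[OF L_pos R k_pos gap_0 gap_nonneg gap_Suc_le_convex[OF f level] n])

lemma gap_tendsto_zero_convex:
  assumes f: "convex_on UNIV f" and R: "R > 0"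
    and level: "\<And>t. t \<in> Theta \<Longrightarrow> f t \<le> f (theta 0 (\<lambda>_. 0)) \<Longrightarrow> norm (t - ts) \<le> R"
  shows "gap \<longlonglongrightarrow> 0"
proof -
  define n0 where "n0 = n0_bound k L R (f (theta 0 (\<lambda>_. 0)) - f ts)"
  show ?thesis
  proof (rule tendsto_sandwich[of "\<lambda>_. 0" _ _ "\<lambda>n. 2 * L * R\<^sup>2 / (2 + (1 / real k) * (real n - real n0))"])
    show "\<forall>\<^sub>F n in sequentially. 0 \<le> gap n" using gap_nonneg by simp
    show "\<forall>\<^sub>F n in sequentially. gap n \<le> 2 * L * R\<^sup>2 / (2 + (1 / real k) * (real n - real n0))"
      using gap_sublinear[OF f R level] by (auto simp: eventually_sequentially n0_def)
    have "real k > 0" using k_pos by simp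
    then show "(\<lambda>n. 2 * L * R\<^sup>2 / (2 + (1 / real k) * (real n - real n0))) \<longlonglongrightarrow> 0"
      using L_pos R by real_asymp
  qed simp
qed

lemma gap_geometric:
  assumes sc: "strongly_convex_on mu f" and mu: "mu > 0"
  shows "gap n \<le> ((1 - 1 / real k) + (1 / real k) * (if mu > 2 * L then L / mu else 1 - mu / (4 * L))) ^ n
           * (f (theta 0 (\<lambda>_. 0)) - f ts)"
proof -
  have "0 \<le> (if mu > 2 * L then L / mu else 1 - mu / (4 * L))"
    using mu L_pos by (auto simp: field_simps)
  then have "0 \<le> (1 - 1 / real k) + (1 / real k) * (if mu > 2 * L then L / mu else 1 - mu / (4 * L))"
    using k_pos by simp
  from geometric_decay[of gap, OF gap_Suc_le_strongly_convex[OF sc mu] this]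
  show ?thesis by (simp add: gap_0)
qed

end

theorem proposition3p2:
  fixes k :: nat and blk :: "'p::finite \<Rightarrow> nat" and Th :: "nat \<Rightarrow> (real^'p) set"
    and f :: "real^'p \<Rightarrow> real" and ts :: "real^'p" and L :: real
    and theta :: "nat \<Rightarrow> (nat \<Rightarrow> nat) \<Rightarrow> real^'p"
    and gb :: "nat \<Rightarrow> (nat \<Rightarrow> nat) \<Rightarrow> nat \<Rightarrow> real^'p \<Rightarrow> real"
  assumes k_pos: "k \<ge> 1"
    and blk_range: "\<forall>j. blk j < k"
    and blk_nonempty: "\<forall>i<k. \<exists>j. blk j = i"
    and Th_block: "\<forall>i<k. Th i \<subseteq> {x. \<forall>j. blk j \<noteq> i \<longrightarrow> x $ j = 0}"
    and Th_convex: "\<forall>i<k. convex (Th i)"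
    and f_cont: "continuous_on UNIV f"
    and f_convex: "convex_on UNIV f"
    and f_bdd: "bdd_below (range f)"
    and ts_in: "ts \<in> block_product blk k Th"
    and ts_min: "\<forall>t \<in> block_product blk k Th. f ts \<le> f t"
    and L_pos: "L > 0"
    and init: "\<forall>\<omega>. theta 0 \<omega> \<in> block_product blk k Th \<and> theta 0 \<omega> = theta 0 (\<lambda>_. 0)"
    and g_adapted: "\<forall>n\<ge>1. \<forall>\<omega> \<omega>'. (\<forall>j\<in>{1..<n}. \<omega> j = \<omega>' j) \<longrightarrow> gb n \<omega> = gb n \<omega>'"
    and theta_adapted: "\<forall>n. \<forall>\<omega> \<omega>'. (\<forall>j\<in>{1..n}. \<omega> j = \<omega>' j) \<longrightarrow> theta n \<omega> = theta n \<omega>'"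
    and g_majorant: "\<forall>n\<ge>1. \<forall>\<omega>. (\<forall>j\<in>{1..<n}. \<omega> j < k) \<longrightarrow>
        (\<forall>x. f x \<le> (\<Sum>i<k. gb n \<omega> i (blockproj blk i x)))"
    and g_surrogate: "\<forall>n\<ge>1. \<forall>\<omega>. (\<forall>j\<in>{1..<n}. \<omega> j < k) \<longrightarrow>
        first_order_surrogate (block_product blk k Th) L f (theta (n - 1) \<omega>)
          (\<lambda>x. \<Sum>i<k. gb n \<omega> i (blockproj blk i x))"
    and update: "\<forall>n\<ge>1. \<forall>\<omega>. (\<forall>j\<in>{1..n}. \<omega> j < k) \<longrightarrow>
        blockproj blk (\<omega> n) (theta n \<omega>) \<in> argmin_on (Th (\<omega> n)) (gb n \<omega> (\<omega> n)) \<and>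
        (\<forall>i<k. i \<noteq> \<omega> n \<longrightarrow> blockproj blk i (theta n \<omega>) = blockproj blk i (theta (n - 1) \<omega>))"
  shows
    "(\<forall>R>0. (\<forall>t \<in> block_product blk k Th. f t \<le> f (theta 0 (\<lambda>_. 0)) \<longrightarrow> norm (t - ts) \<le> R) \<longrightarrow>
        ((AE \<omega> in index_space k. (\<lambda>n. f (theta n \<omega>)) \<longlonglongrightarrow> f ts) \<and>
         (\<forall>n \<ge> n0_bound k L R (f (theta 0 (\<lambda>_. 0)) - f ts).
            (\<integral>\<omega>. f (theta n \<omega>) - f ts \<partial>index_space k)
              \<le> 2 * L * R\<^sup>2 / (2 + (1 / real k) * (real n - real (n0_bound k L R (f (theta 0 (\<lambda>_. 0)) - f ts)))))))
     \<and>
     (\<forall>mu>0. strongly_convex_on mu f \<longrightarrow>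
        (\<forall>n\<ge>1. (\<integral>\<omega>. f (theta n \<omega>) - f ts \<partial>index_space k)
           \<le> ((1 - 1 / real k) + (1 / real k) * (if mu > 2 * L then L / mu else 1 - mu / (4 * L))) ^ n
              * (f (theta 0 (\<lambda>_. 0)) - f ts)))"
proof -
  interpret randomized_block_majorization k blk Th f ts L theta gb
  proof
    fix n :: nat and w w' :: "nat \<Rightarrow> nat"
    assume "\<forall>j\<in>{1..n}. w j = w' j"
    then show "gb (Suc n) w = gb (Suc n) w'" and "theta n w = theta n w'"
      using g_adapted[rule_format, of "Suc n" w w'] theta_adapted
      by (simp_all add: atLeastLessThanSuc_atLeastAtMost)
  next
    fix n :: nat and w :: "nat \<Rightarrow> nat" and x
    assume "\<forall>j\<in>{1..n}. w j < k"
    then show "f x \<le> (\<Sum>i<k. gb (Suc n) w i (blockproj blk i x))"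
      and "first_order_surrogate (block_product blk k Th) L f (theta n w)
             (\<lambda>x. \<Sum>i<k. gb (Suc n) w i (blockproj blk i x))"
      using g_majorant[rule_format, of "Suc n" w] g_surrogate[rule_format, of "Suc n" w]
      by (simp_all add: atLeastLessThanSuc_atLeastAtMost)
  next
    fix n :: nat and w :: "nat \<Rightarrow> nat"
    assume "\<forall>j\<in>{1..Suc n}. w j < k"
    then show "blockproj blk (w (Suc n)) (theta (Suc n) w) \<in> argmin_on (Th (w (Suc n))) (gb (Suc n) w (w (Suc n)))"
      and "\<And>i. i < k \<Longrightarrow> i \<noteq> w (Suc n) \<Longrightarrow> blockproj blk i (theta (Suc n) w) = blockproj blk i (theta n w)"
      using update[rule_format, of "Suc n" w] by auto
  qed (use k_pos Th_convex ts_in ts_min L_pos init in blast)+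
  show ?thesis
  proof (intro conjI allI impI)
    fix R :: real
    assume "R > 0" and "\<forall>t \<in> Theta. f t \<le> f (theta 0 (\<lambda>_. 0)) \<longrightarrow> norm (t - ts) \<le> R"
    then have level: "\<And>t. t \<in> Theta \<Longrightarrow> f t \<le> f (theta 0 (\<lambda>_. 0)) \<Longrightarrow> norm (t - ts) \<le> R" by blast
    show "AE w in index_space k. (\<lambda>n. f (theta n w)) \<longlonglongrightarrow> f ts"
      by (rule AE_f_theta_tendsto[OF gap_tendsto_zero_convex[OF f_convex \<open>R > 0\<close> level]])
    fix n assume "n \<ge> n0_bound k L R (f (theta 0 (\<lambda>_. 0)) - f ts)"
    from gap_sublinear[OF f_convex \<open>R > 0\<close> level this]
    show "(\<integral>w. f (theta n w) - f ts \<partial>index_space k)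
        \<le> 2 * L * R\<^sup>2 / (2 + (1 / real k) * (real n - real (n0_bound k L R (f (theta 0 (\<lambda>_. 0)) - f ts))))"
      by (simp add: integral_gap)
  next
    fix mu :: real and n :: nat
    assume "mu > 0" and "strongly_convex_on mu f"
    from gap_geometric[OF this(2,1)]
    show "(\<integral>w. f (theta n w) - f ts \<partial>index_space k)
        \<le> ((1 - 1 / real k) + (1 / real k) * (if mu > 2 * L then L / mu else 1 - mu / (4 * L))) ^ n
           * (f (theta 0 (\<lambda>_. 0)) - f ts)"
      by (simp add: integral_gap)
  qed
qed

end
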